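(* Let $0<b\le 0.01$ and let $(x_3,x,x,y_3,y,y)$ with $x_3,y_3,x,y>0$ be a point of the curve of equilibria $\mathcal C$. Let $$M=\begin{pmatrix}-x_3(1-y_3)-y_3(1-x_3)-4xy & -4y & -4x\\ x(y_3+y)/2 & -bx_3/x & x\\ y(x_3+x)/2 & y & -by_3/y\end{pmatrix}=(m_{ij}),$$ and $b_2=(m_{11}m_{22}-m_{12}m_{21})+(m_{22}m_{33}-m_{23}m_{32})+(m_{11}m_{33}-m_{13}m_{31})$. Then $\det(M)>b_2\,\mathrm{trace}(M)$.
   Context: Haploid unlinked subfunctionalization model with mutation rate $b$, $\alpha=1-3b$, $w=x_3+y_3-x_3y_3+x_1y_2+x_2y_1$, vector field $F$: $F_{x_3}=x_3(\alpha-w)$; $F_{x_2}=-x_2w+x_2(y_3+y_1)+bx_3-2bx_2$; $F_{x_1}=-x_1w+x_1(y_3+y_2)+bx_3-2bx_1$; $F_{y_3}=y_3(\alpha-w)$; $F_{y_2}=-y_2w+y_2(x_3+x_1)+by_3-2by_2$; $F_{y_1}=-y_1w+y_1(x_3+x_2)+by_3-2by_1$. The curve of equilibria $\mathcal C$ is the one-parameter family of fixed points of $dz/dt=F(z)$ with $x_1=x_2=x$, $y_1=y_2=y$, parametrized by $x_3$ via $y_3=\frac{-d_1+\sqrt{d_1^2-4d_0d_2}}{2d_2}$ with $d_2=-(1-x_3)^2$, $d_1=2(1-x_3)^2-4b(1-x_3)+2b^2(1+x_3)$, $d_0=-(1-x_3)^2+4b(1-x_3)-b^2(5-2x_3)+b^3$,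 and $x=\frac{\Gamma-2bx_3}{2(y_3-\beta)}$, $y=\frac{\Gamma-2by_3}{2(x_3-\beta)}$, $\beta=1-b$, $\Gamma=x_3+y_3-x_3y_3-\alpha$. *)

theory Defs
  imports "HOL-Analysis.Analysis"
begin

text \<open>Haploid unlinked subfunctionalization model, mutation rate b.
  State z = (x3, x2, x1, y3, y2, y1).\<close>

definition alpha :: "real \<Rightarrow> real" where
  "alpha b = 1 - 3 * b"

definition wfit :: "real \<Rightarrow> real \<Rightarrow> real \<Rightarrow> real \<Rightarrow> real \<Rightarrow> real \<Rightarrow> real" where
  "wfit x3 x2 x1 y3 y2 y1 = x3 + y3 - x3 * y3 + x1 * y2 + x2 * y1"

definition Fvec :: "real \<Rightarrow> real \<Rightarrow> real \<Rightarrow> real \<Rightarrow> real \<Rightarrow> real \<Rightarrow> real \<Rightarrow> real list" where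
  "Fvec b x3 x2 x1 y3 y2 y1 =
    (let w = wfit x3 x2 x1 y3 y2 y1 in
     [ x3 * (alpha b - w),
       - x2 * w + x2 * (y3 + y1) + b * x3 - 2 * b * x2,
       - x1 * w + x1 * (y3 + y2) + b * x3 - 2 * b * x1,
       y3 * (alpha b - w),
       - y2 * w + y2 * (x3 + x1) + b * y3 - 2 * b * y2,
       - y1 * w + y1 * (x3 + x2) + b * y3 - 2 * b * y1 ])"

definition is_fixed_point :: "real \<Rightarrow> real \<Rightarrow> real \<Rightarrow> real \<Rightarrow> real \<Rightarrow> real \<Rightarrow> real \<Rightarrow> bool" where
  "is_fixed_point b x3 x2 x1 y3 y2 y1 \<longleftrightarrow> (\<forall>c \<in> set (Fvec b x3 x2 x1 y3 y2 y1). c = 0)"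

text \<open>Parametrization of the curve of equilibria by x3.\<close>
definition cd2 :: "real \<Rightarrow> real \<Rightarrow> real" where
  "cd2 b x3 = - ((1 - x3) ^ 2)"
definition cd1 :: "real \<Rightarrow> real \<Rightarrow> real" where
  "cd1 b x3 = 2 * (1 - x3) ^ 2 - 4 * b * (1 - x3) + 2 * b ^ 2 * (1 + x3)"
definition cd0 :: "real \<Rightarrow> real \<Rightarrow> real" where
  "cd0 b x3 = - ((1 - x3) ^ 2) + 4 * b * (1 - x3) - b ^ 2 * (5 - 2 * x3) + b ^ 3"

definition disc :: "real \<Rightarrow> real \<Rightarrow> real" where
  "disc b x3 = (cd1 b x3) ^ 2 - 4 * cd0 b x3 * cd2 b x3"

definition y3_of :: "real \<Rightarrow> real \<Rightarrow> real" where
  "y3_of b x3 = (- cd1 b x3 + sqrt (disc b x3)) / (2 * cd2 b x3)"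

definition Gamma :: "real \<Rightarrow> real \<Rightarrow> real \<Rightarrow> real" where
  "Gamma b x3 y3 = x3 + y3 - x3 * y3 - alpha b"

definition x_of :: "real \<Rightarrow> real \<Rightarrow> real" where
  "x_of b x3 = (let y3 = y3_of b x3 in (Gamma b x3 y3 - 2 * b * x3) / (2 * (y3 - (1 - b))))"

definition y_of :: "real \<Rightarrow> real \<Rightarrow> real" where
  "y_of b x3 = (let y3 = y3_of b x3 in (Gamma b x3 y3 - 2 * b * y3) / (2 * (x3 - (1 - b))))"

definition on_curve_C :: "real \<Rightarrow> real \<Rightarrow> real \<Rightarrow> real \<Rightarrow> real \<Rightarrow> bool" where
  "on_curve_C b x3 x y3 y \<longleftrightarrow>
     is_fixed_point b x3 x x y3 y y \<and>
     disc b x3 \<ge> 0 \<and> cd2 b x3 \<noteq> 0 \<and>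
     y3 \<noteq> 1 - b \<and> x3 \<noteq> 1 - b \<and>
     y3 = y3_of b x3 \<and> x = x_of b x3 \<and> y = y_of b x3"

definition Mmat :: "real \<Rightarrow> real \<Rightarrow> real \<Rightarrow> real \<Rightarrow> real \<Rightarrow> real^3^3" where
  "Mmat b x3 x y3 y = vector [
     vector [- x3 * (1 - y3) - y3 * (1 - x3) - 4 * x * y, - 4 * y, - 4 * x],
     vector [x * (y3 + y) / 2, - b * x3 / x, x],
     vector [y * (x3 + x) / 2, y, - b * y3 / y]]"

definition b2_coef :: "real^3^3 \<Rightarrow> real" where
  "b2_coef M = (M$1$1 * M$2$2 - M$1$2 * M$2$1) + (M$2$2 * M$3$3 - M$2$3 * M$3$2)
              + (M$1$1 * M$3$3 - M$1$3 * M$3$1)"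

end

theory Submission
  imports Defs
begin

text \<open>Write P, A = b x3/x and B = b y3/y for minus the diagonal entries of M, and u, v for its
  first-column entries m21, m31. For matrices of this shape
  det M - b2 trace M = (A+B)((P+A)(P+B) - xy) + 4yu(P+A-x) + 4xv(P+B-y),
  so it suffices that the margins P+A-x and P+B-y are positive. On the curve the equilibrium
  equations give A = 1-b-y3-y and B = 1-b-x3-x, which turn the margin P+A-x into B+2A+y-4b;
  this is positive for b \<le> 0.01 because either y, y3 or, failing that, x3 is large compared
  with b.\<close>

lemma det_minus_b2_coef_trace:
  fixes P A B x y u v :: real
  defines "M \<equiv> vector [vector [- P, - 4 * y, - 4 * x], vector [u, - A, x], vector [v, y, - B]]
                 :: real^3^3"
  shows "det M - b2_coef M * trace M
     = (A + B) * ((P + A) * (P + B) - x * y) + 4 * y * u * (P + A - x) + 4 * x * v * (P + B - y)"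
  unfolding M_def b2_coef_def trace_def det_3 sum_3 by (simp add: algebra_simps)

lemma det_gt_b2_coef_trace:
  fixes P A B x y u v :: real
  defines "M \<equiv> vector [vector [- P, - 4 * y, - 4 * x], vector [u, - A, x], vector [v, y, - B]]
                 :: real^3^3"
  assumes "A > 0" "B > 0" "x > 0" "y > 0" "u > 0" "v > 0"
    and "P + A - x > 0" "P + B - y > 0"
  shows "det M > b2_coef M * trace M"
proof -
  have "(P + A) * (P + B) > x * y"
    using assms by (intro mult_strict_mono) auto
  then have "(A + B) * ((P + A) * (P + B) - x * y) > 0"
    using assms by simp
  moreover have "4 * y * u * (P + A - x) > 0" "4 * x * v * (P + B - y) > 0"
    using assms by simp_all
  ultimately show ?thesis
    using det_minus_b2_coef_trace[of P y x u A v B] unfolding M_def by linarith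
qed

lemma equilibrium_equations:
  fixes b x3 x y3 y :: real
  assumes "x3 > 0" and "is_fixed_point b x3 x x y3 y y"
  shows "x3 + y3 - x3 * y3 + 2 * x * y = 1 - 3 * b"
    and "x * (1 - b - y3 - y) = b * x3"
    and "y * (1 - b - x3 - x) = b * y3"
proof -
  define w where "w = x3 + y3 - x3 * y3 + x * y + x * y"
  have F3: "x3 * (1 - 3 * b - w) = 0"
    and Fx: "- x * w + x * (y3 + y) + b * x3 - 2 * b * x = 0"
    and Fy: "- y * w + y * (x3 + x) + b * y3 - 2 * b * y = 0"
    using assms(2) unfolding is_fixed_point_def Fvec_def Let_def wfit_def alpha_def w_def
    by (auto simp: algebra_simps)
  have w: "w = 1 - 3 * b"
    using F3 assms(1) by simp
  then show "x3 + y3 - x3 * y3 + 2 * x * y = 1 - 3 * b"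
    unfolding w_def by simp
  show "x * (1 - b - y3 - y) = b * x3" "y * (1 - b - x3 - x) = b * y3"
    using Fx Fy unfolding w by (simp_all add: algebra_simps)
qed

lemma equilibrium_margin_pos:
  fixes b x3 x y3 y :: real
  assumes "0 < b" "b \<le> 0.01" "x3 > 0" "y3 > 0" "x > 0" "y > 0"
    and fit: "x3 + y3 - x3 * y3 + 2 * x * y = 1 - 3 * b"
    and eqx: "x * (1 - b - y3 - y) = b * x3"
    and eqy: "y * (1 - b - x3 - x) = b * y3"
  shows "(1 - b - x3 - x) + 2 * (1 - b - y3 - y) + y - 4 * b > 0"
proof -
  define A where "A = 1 - b - y3 - y"
  define B where "B = 1 - b - x3 - x"
  have A: "A = b * x3 / x" and B: "B = b * y3 / y"
    using eqx eqy assms(5,6) unfolding A_def B_def by (simp_all add: field_simps)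
  have "A > 0" "B > 0"
    unfolding A B using assms by simp_all
  consider "y \<ge> 4 * b" | "y < 4 * b" "y3 \<ge> 16 * b" | "y < 4 * b" "y3 < 16 * b"
    by linarith
  then have "B + 2 * A + y - 4 * b > 0"
  proof cases
    case 1
    then show ?thesis using \<open>A > 0\<close> \<open>B > 0\<close> by linarith
  next
    case 2
    have "b * y3 > b * (4 * y)"
      using 2 assms(1) by (simp add: mult_strict_left_mono)
    then have "B > 4 * b"
      unfolding B using assms(6) by (simp add: field_simps)
    then show ?thesis using \<open>A > 0\<close> assms(6) by linarith
  next
    case 3
    have "x3 < 1" "x < 1"
      using \<open>B > 0\<close> assms unfolding B_def by linarith+
    have "x * y \<le> 1 * (4 * b)"
      using 3 \<open>x < 1\<close> assms(5,6) by (intro mult_mono) auto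
    then have "(1 - x3) * (1 - y3) \<le> 11 * b"
      using fit by (simp add: algebra_simps)
    moreover have "(1 - x3) * (84 / 100) \<le> (1 - x3) * (1 - y3)"
      using 3 assms(2) \<open>x3 < 1\<close> by (intro mult_left_mono) auto
    ultimately have "1 - x3 < 131 / 10 * b"
      using assms(1) by argo
    moreover have "b \<le> 1 / 100"
      using assms(2) by simp
    ultimately have "4 * x < x3"
      using \<open>B > 0\<close> unfolding B_def by linarith
    then have "A > 4 * b"
      unfolding A using assms(1,5) by (simp add: field_simps)
    then show ?thesis using \<open>B > 0\<close> assms(1,6) by linarith
  qed
  then show ?thesis unfolding A_def B_def .
qed

theorem lemma3:
  fixes b x3 x y3 y :: real
  assumes "0 < b" and "b \<le> 0.01"
    and "x3 > 0" and "y3 > 0" and "x > 0" and "y > 0"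
    and "on_curve_C b x3 x y3 y"
  shows "det (Mmat b x3 x y3 y) > b2_coef (Mmat b x3 x y3 y) * trace (Mmat b x3 x y3 y)"
proof -
  have fp: "is_fixed_point b x3 x x y3 y y"
    using assms(7) unfolding on_curve_C_def by blast
  note eqs = equilibrium_equations[OF assms(3) fp]
  define P where "P = x3 * (1 - y3) + y3 * (1 - x3) + 4 * x * y"
  have A: "b * x3 / x = 1 - b - y3 - y" and B: "b * y3 / y = 1 - b - x3 - x"
    using eqs(2,3) assms(5,6) by (simp_all add: field_simps)
  have M: "Mmat b x3 x y3 y = vector [vector [- P, - 4 * y, - 4 * x],
      vector [x * (y3 + y) / 2, - (b * x3 / x), x], vector [y * (x3 + x) / 2, y, - (b * y3 / y)]]"
    unfolding Mmat_def P_def by (simp add: algebra_simps)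
  have "P + b * x3 / x - x > 0"
    using equilibrium_margin_pos[OF assms(1-6) eqs] eqs(1) unfolding A P_def
    by (simp add: algebra_simps)
  moreover have "P + b * y3 / y - y > 0"
  proof -
    have "y3 + x3 - y3 * x3 + 2 * y * x = 1 - 3 * b"
      using eqs(1) by (simp add: algebra_simps)
    from equilibrium_margin_pos[OF assms(1,2,4,3,6,5) this eqs(3,2)] show ?thesis
      using eqs(1) unfolding B P_def by (simp add: algebra_simps)
  qed
  ultimately show ?thesis
    unfolding M using assms(1,3-6) by (intro det_gt_b2_coef_trace) simp_all
qed

end
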